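(* Let $p\neq 2$ be a prime and let $\mathbb{Z}(p)$ be the field of integers modulo $p$. Let $a_2,a_3,b_2,b_3$ be nonzero elements of $\mathbb{Z}(p)$. Let $\xi_1,\xi_2,\xi_3,\xi_4$ be independent $\mathbb{Z}(p)$-valued random variables with nowhere-vanishing characteristic functions, and put $L_1=\xi_1+a_2\xi_2+a_3\xi_3$, $L_2=b_2\xi_2+b_3\xi_3+\xi_4$. Let $\eta_1,\dots,\eta_4$ be any independent $\mathbb{Z}(p)$-valued random variables with nowhere-vanishing characteristic functions such that $(\eta_1+a_2\eta_2+a_3\eta_3,\ b_2\eta_2+b_3\eta_3+\eta_4)$ has the same distribution as $(L_1,L_2)$. Then: 1. If $a_2b_3\neq a_3b_2$, there exist $\alpha_1,\dots,\alpha_4\in\mathbb{Z}(p)$ such that $\eta_j$ has the same distribution as $\xi_j+\alpha_j$ for $j=1,2,3,4$. 2. If $a_2b_3=a_3b_2$, there exist $\alpha_1,\alpha_4\in\mathbb{Z}(p)$ such that $\eta_j$ has the same distribution as $\xi_j+\alpha_j$ for $j=1,4$.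
   Context: The character group of the additive group of $\mathbb{Z}(p)$ is isomorphic to $\mathbb{Z}(p)$; write $(x,y)$ for the value of the character $y$ at $x$, with $(ax,y)=(x,ay)$. The characteristic function of a $\mathbb{Z}(p)$-valued random variable $\xi$ is $y\mapsto\mathbf{E}[(\xi,y)]$ on the character group; "nowhere-vanishing" means it is nonzero at every $y$. *)

theory Defs
  imports "HOL-Probability.Probability" "Berlekamp_Zassenhaus.Finite_Field"
begin

text \<open>The field Z(p) is the type 'p mod_ring with 'p of class prime_card, so p = CARD('p).
  The character pairing (x,y) = exp(2 pi i x y / p).\<close>

definition zp_pairing :: "'p::finite mod_ring \<Rightarrow> 'p mod_ring \<Rightarrow> complex" where
  "zp_pairing x y = cis (2 * pi * real_of_int (to_int_mod_ring (x * y)) / real CARD('p))"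

definition zp_charfun :: "'a measure \<Rightarrow> ('a \<Rightarrow> 'p::finite mod_ring) \<Rightarrow> 'p mod_ring \<Rightarrow> complex" where
  "zp_charfun M X y = (LINT \<omega>|M. zp_pairing (X \<omega>) y)"

end

theory Submission
  imports Defs
begin

text \<open>Put \<open>h\<^sub>j = \<phi>\<^sub>\<eta>\<^sub>j / \<phi>\<^sub>\<xi>\<^sub>j\<close>, the ratio of characteristic functions. Computing the joint
  characteristic function of the two linear forms with independence, equality of their distributions
  becomes \<open>h\<^sub>1(u) h\<^sub>2(a\<^sub>2u + b\<^sub>2v) h\<^sub>3(a\<^sub>3u + b\<^sub>3v) h\<^sub>4(v) = 1\<close> for all \<open>u, v\<close>. A function
  \<open>F(u, v) = 1 / (f(u) g(v))\<close> satisfies the rectangle identity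
  \<open>F(u', v') F(u, v) = F(u', v) F(u, v')\<close>; applied to \<open>h\<^sub>2(a\<^sub>2u + b\<^sub>2v) h\<^sub>3(a\<^sub>3u + b\<^sub>3v)\<close>
  it shows, when \<open>a\<^sub>2b\<^sub>3 \<noteq> a\<^sub>3b\<^sub>2\<close>, that \<open>h\<^sub>2\<close> and \<open>h\<^sub>3\<close> are multiplicatively quadratic.
  Since \<open>h(-y) = conj h(y)\<close> and \<open>p\<close> is odd, they are then characters, and so are \<open>h\<^sub>1\<close> and \<open>h\<^sub>4\<close>.
  When \<open>a\<^sub>2b\<^sub>3 = a\<^sub>3b\<^sub>2\<close> the same identity shows that \<open>w \<mapsto> h\<^sub>2(w) h\<^sub>3(a\<^sub>3w / a\<^sub>2)\<close> is a
  character, hence \<open>h\<^sub>1\<close> and \<open>h\<^sub>4\<close> are. Finally \<open>h\<^sub>j = (\<alpha>\<^sub>j, \<cdot>)\<close> says that \<open>\<eta>\<^sub>j\<close> and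
  \<open>\<xi>\<^sub>j + \<alpha>\<^sub>j\<close> have the same characteristic function, hence the same distribution.\<close>

section \<open>Additive characters of \<open>\<int>/n\<close>\<close>

definition zp_exp :: "'n::nontriv mod_ring \<Rightarrow> complex" where
  "zp_exp z = zp_pairing z 1"

lemma zp_pairing_eq_zp_exp: "zp_pairing x y = zp_exp (x * y)"
  by (simp add: zp_exp_def zp_pairing_def)

lemma zp_exp_eq_cis:
  "zp_exp (z :: 'n::nontriv mod_ring) = cis (2 * pi * real_of_int (to_int_mod_ring z) / real CARD('n))"
  by (simp add: zp_exp_def zp_pairing_def)

lemma ex_of_nat_mod_ring: "\<exists>k. x = (of_nat k :: 'n::nontriv mod_ring)"
proof
  have "to_int_mod_ring x \<ge> 0"
    using range_to_int_mod_ring[where 'a='n] by auto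
  then show "x = of_nat (nat (to_int_mod_ring x))"
    by (simp add: of_nat_of_int_mod_ring)
qed

lemma cis_2pi_int_mod:
  assumes "n > 0"
  shows "cis (2 * pi * real_of_int (k mod int n) / real n) = cis (2 * pi * real_of_int k / real n)"
proof -
  have "real_of_int k = real_of_int (k mod int n) + real n * real_of_int (k div int n)"
    by (metis mod_mult_div_eq of_int_add of_int_mult of_int_of_nat_eq)
  then have "2 * pi * real_of_int k / real n
      = 2 * pi * real_of_int (k mod int n) / real n + 2 * pi * real_of_int (k div int n)"
    using assms by (simp add: field_simps)
  then show ?thesis
    by (simp flip: cis_mult)
qed

lemma zp_exp_add: "zp_exp (z + w :: 'n::nontriv mod_ring) = zp_exp z * zp_exp w"
proof -
  have "zp_exp (z + w) = cis (2 * pi * real_of_int (to_int_mod_ring z + to_int_mod_ring w) / real CARD('n))"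
    by (simp add: zp_exp_eq_cis to_int_mod_ring_add cis_2pi_int_mod)
  then show ?thesis
    by (simp add: zp_exp_eq_cis cis_mult add_divide_distrib distrib_left)
qed

lemma zp_exp_0 [simp]: "zp_exp 0 = 1"
  by (simp add: zp_exp_eq_cis)

lemma norm_zp_exp [simp]: "norm (zp_exp z) = 1"
  by (simp add: zp_exp_eq_cis)

lemma zp_exp_nonzero [simp]: "zp_exp z \<noteq> 0"
  using norm_zp_exp[of z] by (metis norm_zero zero_neq_one)

lemma zp_exp_uminus: "zp_exp (- z) = cnj (zp_exp z)"
proof -
  have "zp_exp (- z) * zp_exp z = 1"
    by (simp flip: zp_exp_add)
  moreover have "cnj (zp_exp z) * zp_exp z = 1"
    using complex_norm_square[of "zp_exp z"] by (simp add: mult.commute)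
  ultimately show ?thesis
    by (metis mult_right_cancel zp_exp_nonzero)
qed

lemma inverse_zp_exp: "inverse (zp_exp z) = zp_exp (- z)"
  by (rule inverse_unique) (simp flip: zp_exp_add)

lemma zp_exp_sum: "zp_exp (\<Sum>i\<in>I. f i) = (\<Prod>i\<in>I. zp_exp (f i))"
  by (induction I rule: infinite_finite_induct) (simp_all add: zp_exp_add)

lemma zp_exp_eq_1_iff [simp]:
  fixes z :: "'n::nontriv mod_ring"
  shows "zp_exp z = 1 \<longleftrightarrow> z = 0"
proof
  assume "zp_exp z = 1"
  define t where "t = nat (to_int_mod_ring z)"
  have "to_int_mod_ring z \<in> {0..<int CARD('n)}"
    using range_to_int_mod_ring[where 'a='n] by blast
  then have t: "t < CARD('n)" "int t = to_int_mod_ring z"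
    unfolding t_def by auto
  have "cis (2 * pi * real t / real CARD('n)) = cis (2 * pi * real 0 / real CARD('n))"
    using \<open>zp_exp z = 1\<close> by (simp add: zp_exp_eq_cis flip: t(2))
  then have "t = 0"
    using Complex.bij_betw_roots_unity[of "CARD('n)"] t(1)
    unfolding bij_betw_def inj_on_def by (metis lessThan_iff zero_less_card_finite)
  then have "z = of_int_mod_ring 0"
    using t(2) by (metis of_int_mod_ring_to_int_mod_ring of_nat_0)
  then show "z = 0"
    by simp
qed simp

lemma sum_zp_exp_mult:
  "(\<Sum>y\<in>UNIV. zp_exp (w * y :: 'n::nontriv mod_ring)) = (if w = 0 then of_nat CARD('n) else 0)"
proof (cases "w = 0")
  case False
  have "(\<Sum>y\<in>UNIV. zp_exp (w * (y + 1))) = (\<Sum>y\<in>UNIV. zp_exp (w * y))"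
    by (rule sum.reindex_bij_witness[where i = "\<lambda>y. y - 1" and j = "\<lambda>y. y + 1"]) auto
  then have "zp_exp w * (\<Sum>y\<in>UNIV. zp_exp (w * y)) = (\<Sum>y\<in>UNIV. zp_exp (w * y))"
    by (simp add: distrib_left zp_exp_add sum_distrib_left mult.commute)
  then have "(zp_exp w - 1) * (\<Sum>y\<in>UNIV. zp_exp (w * y)) = 0"
    by (simp add: algebra_simps)
  with False show ?thesis
    by simp
qed simp

lemma zp_exp_of_nat: "zp_exp (of_nat k :: 'n::nontriv mod_ring) = zp_exp (1 :: 'n mod_ring) ^ k"
  by (induction k) (simp_all add: zp_exp_add)

lemma zp_exp_1: "zp_exp (1 :: 'n::nontriv mod_ring) = cis (2 * pi / real CARD('n))"
  by (simp add: zp_exp_eq_cis)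

definition is_zp_character :: "('n::nontriv mod_ring \<Rightarrow> complex) \<Rightarrow> bool" where
  "is_zp_character \<phi> \<longleftrightarrow> (\<exists>\<alpha>. \<phi> = zp_pairing \<alpha>)"

lemma is_zp_character_if_shift_mult:
  fixes \<phi> :: "'n::nontriv mod_ring \<Rightarrow> complex"
  assumes \<phi>_0: "\<phi> 0 = 1" and shift: "\<And>x. \<phi> (x + 1) = \<phi> x * \<phi> 1"
  shows "is_zp_character \<phi>"
proof -
  have \<phi>_of_nat: "\<phi> (of_nat k) = \<phi> 1 ^ k" for k
    by (induction k) (simp_all add: \<phi>_0 shift add.commute[of 1])
  have "\<phi> 1 ^ CARD('n) = 1"
    using \<phi>_of_nat[of "CARD('n)"] \<phi>_0 by simp
  then obtain k where k: "\<phi> 1 = cis (2 * pi * real k / real CARD('n))"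
    using Complex.bij_betw_roots_unity[of "CARD('n)"] unfolding bij_betw_def by force
  have "cis (2 * pi * real k / real CARD('n)) = cis (2 * pi / real CARD('n)) ^ k"
    by (simp add: Complex.DeMoivre field_simps)
  then have "\<phi> 1 = zp_exp (1 :: 'n mod_ring) ^ k"
    by (simp add: k zp_exp_1)
  then have "\<phi> y = zp_pairing (of_nat k) y" for y
    using ex_of_nat_mod_ring[of y]
    by (auto simp: \<phi>_of_nat zp_pairing_eq_zp_exp zp_exp_of_nat power_mult simp flip: of_nat_mult)
  then show ?thesis
    unfolding is_zp_character_def by blast
qed

lemma is_zp_character_mult:
  assumes "is_zp_character \<phi>" "is_zp_character \<psi>"
  shows "is_zp_character (\<lambda>x. \<phi> x * \<psi> x)"
proof -
  obtain \<alpha> \<beta> where "\<phi> = zp_pairing \<alpha>" "\<psi> = zp_pairing \<beta>"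
    using assms unfolding is_zp_character_def by blast
  then have "(\<lambda>x. \<phi> x * \<psi> x) = zp_pairing (\<alpha> + \<beta>)"
    by (simp add: fun_eq_iff zp_pairing_eq_zp_exp distrib_right zp_exp_add)
  then show ?thesis
    unfolding is_zp_character_def by blast
qed

lemma is_zp_character_scale:
  assumes "is_zp_character \<phi>"
  shows "is_zp_character (\<lambda>x. \<phi> (a * x))"
proof -
  obtain \<alpha> where "\<phi> = zp_pairing \<alpha>"
    using assms unfolding is_zp_character_def by blast
  then have "(\<lambda>x. \<phi> (a * x)) = zp_pairing (\<alpha> * a)"
    by (simp add: fun_eq_iff zp_pairing_eq_zp_exp mult.assoc)
  then show ?thesis
    unfolding is_zp_character_def by blast
qed

lemma is_zp_character_inverse:
  assumes "is_zp_character \<phi>"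
  shows "is_zp_character (\<lambda>x. inverse (\<phi> x))"
proof -
  obtain \<alpha> where "\<phi> = zp_pairing \<alpha>"
    using assms unfolding is_zp_character_def by blast
  then have "(\<lambda>x. inverse (\<phi> x)) = zp_pairing (- \<alpha>)"
    by (simp add: fun_eq_iff zp_pairing_eq_zp_exp inverse_zp_exp)
  then show ?thesis
    unfolding is_zp_character_def by blast
qed

lemma real_odd_root_of_unity:
  fixes c :: complex
  assumes "cnj c = c" "c ^ n = 1" "odd n"
  shows "c = 1"
proof -
  have c: "c = of_real (Re c)"
    using assms(1) by (simp add: complex_eq_iff)
  then have "Re c ^ n = 1"
    using assms(2) by (metis of_real_eq_1_iff of_real_power)
  then have "root n 1 = Re c"
    by (rule odd_real_root_unique[OF \<open>odd n\<close>])
  then have "Re c = 1"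
    using odd_pos[OF \<open>odd n\<close>] by simp
  then show ?thesis
    using c by simp
qed

lemma real_hom_eq_1:
  fixes \<psi> :: "'n::nontriv mod_ring \<Rightarrow> complex"
  assumes odd: "odd CARD('n)" and \<psi>_0: "\<psi> 0 = 1"
    and hom: "\<And>x y. \<psi> (x + y) = \<psi> x * \<psi> y" and real: "\<And>x. cnj (\<psi> x) = \<psi> x"
  shows "\<psi> x = 1"
proof (rule real_odd_root_of_unity[OF real _ odd])
  have "\<psi> x ^ k = \<psi> (of_nat k * x)" for k
    by (induction k) (simp_all add: \<psi>_0 hom distrib_right)
  from this[of "CARD('n)"] show "\<psi> x ^ CARD('n) = 1"
    by (simp add: \<psi>_0)
qed

text \<open>The quadratic relation makes \<open>\<delta> x = \<phi> (x + 1) / (\<phi> x * \<phi> 1)\<close> a character and hermitian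
  symmetry makes it real; a real character of a group of odd order is trivial.\<close>

lemma is_zp_character_if_quadratic_hermitian:
  fixes \<phi> :: "'n::nontriv mod_ring \<Rightarrow> complex"
  assumes odd: "odd CARD('n)" and \<phi>_0: "\<phi> 0 = 1" and nonzero: "\<And>x. \<phi> x \<noteq> 0"
    and hermitian: "\<And>x. \<phi> (- x) = cnj (\<phi> x)"
    and quadratic: "\<And>s x y. \<phi> (s + x + y) * \<phi> s * \<phi> x * \<phi> y = \<phi> (s + x) * \<phi> (s + y) * \<phi> (x + y)"
  shows "is_zp_character \<phi>"
proof (rule is_zp_character_if_shift_mult[where \<phi> = \<phi>, OF \<phi>_0])
  define \<delta> where "\<delta> x = \<phi> (x + 1) / (\<phi> x * \<phi> 1)" for x
  have "\<delta> x = 1" for x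
  proof (rule real_hom_eq_1[OF odd])
    show "\<delta> 0 = 1"
      using nonzero by (simp add: \<delta>_def \<phi>_0)
    show "\<delta> (x + y) = \<delta> x * \<delta> y" for x y
      using quadratic[of x y 1] nonzero by (simp add: \<delta>_def field_simps)
    show "cnj (\<delta> x) = \<delta> x" for x
      using quadratic[of "- (x + 1)" x 1] nonzero
      by (simp add: \<delta>_def \<phi>_0 field_simps flip: hermitian)
  qed
  then show "\<phi> (x + 1) = \<phi> x * \<phi> 1" for x
    using nonzero by (simp add: \<delta>_def)
qed

section \<open>Separable functional equations\<close>

lemma separable_rectangle:
  fixes F :: "'a \<Rightarrow> 'b \<Rightarrow> 'c::field"
  assumes "\<And>u v. f u * F u v * g v = 1"
  shows "F u' v' * F u v = F u' v * F u v'"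
proof -
  have "F u v = inverse (f u * g v)" for u v
  proof -
    have "(f u * g v) * F u v = 1"
      using assms[of u v] by (simp add: mult_ac)
    then show ?thesis
      by (rule inverse_unique [symmetric])
  qed
  then show ?thesis
    by (simp add: mult_ac)
qed

lemma hom_if_separable_linear:
  fixes H :: "'k::field \<Rightarrow> 'c::field"
  assumes "\<And>u v. f u * H (a * u + b * v) * g v = 1" and "a \<noteq> 0" "b \<noteq> 0"
  shows "H (x + y) * H 0 = H x * H y"
  using separable_rectangle[where F = "\<lambda>u v. H (a * u + b * v)", OF assms(1),
        where u' = "x / a" and v' = "y / b" and u = 0 and v = 0] assms(2,3)
  by simp

lemma ex_linear_preimage:
  fixes a b c d :: "'k::field"
  assumes "a * d \<noteq> b * c"
  shows "\<exists>u v. a * u + b * v = S \<and> c * u + d * v = T"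
proof (intro exI conjI)
  define D where "D = a * d - b * c"
  have "D \<noteq> 0"
    using assms by (simp add: D_def)
  then show "a * ((d * S - b * T) / D) + b * ((a * T - c * S) / D) = S"
    and "c * ((d * S - b * T) / D) + d * ((a * T - c * S) / D) = T"
    by (simp_all add: field_simps) (simp_all add: D_def algebra_simps)
qed

text \<open>Solving \<open>aB * u + bB * v = S\<close>, \<open>aC * u + bC * v = T\<close> and moving \<open>(u, v)\<close> by
  \<open>(x / aB, y / bB)\<close>, the rectangle identity relates increments of \<open>hB\<close> at \<open>S\<close> to increments
  of \<open>hC\<close> at \<open>T\<close>; comparing \<open>S = s\<close> with \<open>S = 0\<close> at the same \<open>T\<close> eliminates \<open>hC\<close>.\<close>

lemma quadratic_if_separable_two_forms:
  fixes hB hC :: "'k::field \<Rightarrow> 'c::field"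
  assumes E: "\<And>u v. f u * hB (aB * u + bB * v) * hC (aC * u + bC * v) * g v = 1"
    and aB: "aB \<noteq> 0" and bB: "bB \<noteq> 0" and det: "aB * bC \<noteq> aC * bB"
  shows "hB (s + x + y) * hB s * hB x * hB y = hB (s + x) * hB (s + y) * hB (x + y) * hB 0"
proof -
  have det': "aB * bC \<noteq> bB * aC"
    using det by (simp add: mult.commute)
  define X Y where "X = aC * (x / aB)" and "Y = bC * (y / bB)"
  have increments: "hB (S + x + y) * hB S * (hC (T + X + Y) * hC T)
      = hB (S + x) * hB (S + y) * (hC (T + X) * hC (T + Y))" for S T
  proof -
    obtain u v where uv: "aB * u + bB * v = S" "aC * u + bC * v = T"
      using ex_linear_preimage[OF det'] by blast
    define F where "F p q = hB (aB * p + bB * q) * hC (aC * p + bC * q)" for p q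
    have "f p * F p q * g q = 1" for p q
      using E by (simp add: F_def mult.assoc)
    then have "F (u + x / aB) (v + y / bB) * F u v = F (u + x / aB) v * F u (v + y / bB)"
      by (rule separable_rectangle)
    then show ?thesis
      unfolding uv [symmetric] using aB bB by (simp add: F_def X_def Y_def algebra_simps)
  qed
  have hC_nonzero: "hC t \<noteq> 0" for t
  proof -
    obtain u v where "aB * u + bB * v = 0" "aC * u + bC * v = t"
      using ex_linear_preimage[OF det'] by blast
    then show ?thesis
      using E[of u v] by auto
  qed
  define K L where "K = hC (X + Y) * hC 0" and "L = hC X * hC Y"
  have "K * L \<noteq> 0"
    using hC_nonzero by (simp add: K_def L_def)
  have at_s: "(hB (s + x + y) * hB s) * K = (hB (s + x) * hB (s + y)) * L"
    using increments[of s 0] by (simp add: K_def L_def)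
  have at_0: "(hB (x + y) * hB 0) * K = (hB x * hB y) * L"
    using increments[of 0 0] by (simp add: K_def L_def)
  have "(hB (s + x + y) * hB s * hB x * hB y) * (K * L)
      = ((hB (s + x + y) * hB s) * K) * ((hB x * hB y) * L)"
    by (simp only: mult_ac)
  also have "\<dots> = ((hB (s + x) * hB (s + y)) * L) * ((hB (x + y) * hB 0) * K)"
    by (simp only: at_s at_0)
  also have "\<dots> = (hB (s + x) * hB (s + y) * hB (x + y) * hB 0) * (K * L)"
    by (simp only: mult_ac)
  finally show ?thesis
    using \<open>K * L \<noteq> 0\<close> by simp
qed

section \<open>Characteristic functions of \<open>\<int>/n\<close>-valued random variables\<close>

lemma integrable_finite_valued:
  fixes F :: "'c::finite \<Rightarrow> 'b::{banach, second_countable_topology}"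
  assumes "finite_measure M" and X: "X \<in> M \<rightarrow>\<^sub>M count_space UNIV"
  shows "integrable M (\<lambda>\<omega>. F (X \<omega>))"
proof -
  interpret finite_measure M by fact
  show ?thesis
  proof (rule integrable_const_bound[where B = "\<Sum>x\<in>UNIV. norm (F x)"])
    show "AE \<omega> in M. norm (F (X \<omega>)) \<le> (\<Sum>x\<in>UNIV. norm (F x))"
      by (intro AE_I2 member_le_sum) auto
    show "(\<lambda>\<omega>. F (X \<omega>)) \<in> borel_measurable M"
      using X by measurable
  qed
qed

lemma integral_comp_eq_if_distr_eq:
  fixes F :: "'c \<Rightarrow> 'b::{banach, second_countable_topology}"
  assumes "X \<in> M \<rightarrow>\<^sub>M count_space UNIV" "Y \<in> N \<rightarrow>\<^sub>M count_space UNIV"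
    and "distr N (count_space UNIV) Y = distr M (count_space UNIV) X"
  shows "(LINT \<omega>|N. F (Y \<omega>)) = (LINT \<omega>|M. F (X \<omega>))"
proof -
  have "(LINT \<omega>|N. F (Y \<omega>)) = integral\<^sup>L (distr N (count_space UNIV) Y) F"
    using assms(2) by (intro integral_distr [symmetric]) simp_all
  also have "\<dots> = (LINT \<omega>|M. F (X \<omega>))"
    unfolding assms(3) using assms(1) by (intro integral_distr) simp_all
  finally show ?thesis .
qed

lemma zp_charfun_0:
  fixes X :: "'a \<Rightarrow> 'n::nontriv mod_ring"
  shows "prob_space M \<Longrightarrow> zp_charfun M X 0 = 1"
  by (simp add: zp_charfun_def zp_pairing_eq_zp_exp prob_space.prob_space)

lemma zp_charfun_uminus:
  fixes X :: "'a \<Rightarrow> 'n::nontriv mod_ring"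
  shows "zp_charfun M X (- y) = cnj (zp_charfun M X y)"
  by (simp add: zp_charfun_def zp_pairing_eq_zp_exp zp_exp_uminus)

lemma zp_charfun_shift:
  fixes X :: "'a \<Rightarrow> 'n::nontriv mod_ring"
  shows "zp_charfun M (\<lambda>\<omega>. X \<omega> + a) y = zp_pairing a y * zp_charfun M X y"
  unfolding zp_charfun_def zp_pairing_eq_zp_exp distrib_right zp_exp_add by (simp add: mult.commute)

lemma zp_charfun_inversion:
  fixes X :: "'a \<Rightarrow> 'n::nontriv mod_ring"
  assumes M: "finite_measure M" and X: "X \<in> M \<rightarrow>\<^sub>M count_space UNIV"
  shows "complex_of_real (measure M (X -` {z} \<inter> space M))
       = (\<Sum>y\<in>UNIV. zp_charfun M X y * zp_exp (- (z * y))) / of_nat CARD('n)"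
proof -
  interpret finite_measure M by fact
  have "(\<Sum>y\<in>UNIV. zp_charfun M X y * zp_exp (- (z * y)))
      = (\<Sum>y\<in>UNIV. LINT \<omega>|M. zp_exp (X \<omega> * y) * zp_exp (- (z * y)))"
    by (simp add: zp_charfun_def zp_pairing_eq_zp_exp)
  also have "\<dots> = (LINT \<omega>|M. (\<Sum>y\<in>UNIV. zp_exp (X \<omega> * y) * zp_exp (- (z * y))))"
    using integrable_finite_valued[OF M X]
    by (intro Bochner_Integration.integral_sum [where f = "\<lambda>y \<omega>. zp_exp (X \<omega> * y) * zp_exp (- (z * y))", symmetric])
  also have "\<dots> = (LINT \<omega>|M. (\<Sum>y\<in>UNIV. zp_exp ((X \<omega> - z) * y)))"
    by (simp add: algebra_simps flip: zp_exp_add)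
  also have "\<dots> = (LINT \<omega>|M. complex_of_real (real CARD('n) * indicator (X -` {z} \<inter> space M) \<omega>))"
    by (intro Bochner_Integration.integral_cong) (auto simp: sum_zp_exp_mult indicator_def)
  also have "\<dots> = of_nat CARD('n) * complex_of_real (measure M (X -` {z} \<inter> space M))"
    by simp
  finally show ?thesis
    by simp
qed

lemma distr_eq_if_zp_charfun_eq:
  fixes X :: "'a \<Rightarrow> 'n::nontriv mod_ring" and Y :: "'b \<Rightarrow> 'n mod_ring"
  assumes "finite_measure M" "X \<in> M \<rightarrow>\<^sub>M count_space UNIV"
    and "finite_measure N" "Y \<in> N \<rightarrow>\<^sub>M count_space UNIV"
    and "\<And>y. zp_charfun N Y y = zp_charfun M X y"
  shows "distr N (count_space UNIV) Y = distr M (count_space UNIV) X"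
proof (rule measure_eqI_countable[where A = UNIV])
  fix z
  have "complex_of_real (measure N (Y -` {z} \<inter> space N)) = measure M (X -` {z} \<inter> space M)"
    unfolding zp_charfun_inversion[OF assms(1,2)] zp_charfun_inversion[OF assms(3,4)] assms(5) ..
  then have "measure N (Y -` {z} \<inter> space N) = measure M (X -` {z} \<inter> space M)"
    by (simp only: of_real_eq_iff)
  then show "emeasure (distr N (count_space UNIV) Y) {z} = emeasure (distr M (count_space UNIV) X) {z}"
    using assms(2,4)
    by (simp add: emeasure_distr finite_measure.emeasure_eq_measure[OF assms(1)]
        finite_measure.emeasure_eq_measure[OF assms(3)])
qed simp_all


lemma distr_eq_shift_if_is_zp_character:
  fixes X :: "'a \<Rightarrow> 'n::nontriv mod_ring" and Y :: "'b \<Rightarrow> 'n mod_ring"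
  assumes M: "finite_measure M" "X \<in> M \<rightarrow>\<^sub>M count_space UNIV"
    and N: "finite_measure N" "Y \<in> N \<rightarrow>\<^sub>M count_space UNIV"
    and nonzero: "\<And>y. zp_charfun M X y \<noteq> 0"
    and "is_zp_character (\<lambda>y. zp_charfun N Y y / zp_charfun M X y)"
  shows "\<exists>\<alpha>. distr N (count_space UNIV) Y = distr M (count_space UNIV) (\<lambda>\<omega>. X \<omega> + \<alpha>)"
proof -
  obtain \<alpha> where \<alpha>: "\<And>y. zp_charfun N Y y / zp_charfun M X y = zp_pairing \<alpha> y"
    using assms(6) unfolding is_zp_character_def by metis
  have "distr N (count_space UNIV) Y = distr M (count_space UNIV) (\<lambda>\<omega>. X \<omega> + \<alpha>)"
  proof (rule distr_eq_if_zp_charfun_eq[OF M(1) _ N])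
    show "(\<lambda>\<omega>. X \<omega> + \<alpha>) \<in> M \<rightarrow>\<^sub>M count_space UNIV"
      using M(2) by measurable
    show "zp_charfun N Y y = zp_charfun M (\<lambda>\<omega>. X \<omega> + \<alpha>) y" for y
      using \<alpha>[of y] nonzero[of y] by (simp add: zp_charfun_shift divide_eq_eq)
  qed
  then show ?thesis ..
qed

lemma zp_charfun_sum_indep:
  fixes X :: "'i \<Rightarrow> 'a \<Rightarrow> 'n::nontriv mod_ring"
  assumes M: "prob_space M" and indep: "prob_space.indep_vars M (\<lambda>_. count_space UNIV) X I"
    and "finite I"
  shows "(LINT \<omega>|M. zp_exp (\<Sum>i\<in>I. X i \<omega> * c i)) = (\<Prod>i\<in>I. zp_charfun M (X i) (c i))"
proof -
  interpret prob_space M by fact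
  have X: "X i \<in> M \<rightarrow>\<^sub>M count_space UNIV" if "i \<in> I" for i
    using indep that unfolding indep_vars_def by auto
  have "indep_vars (\<lambda>_. borel) (\<lambda>i \<omega>. zp_exp (X i \<omega> * c i)) I"
    by (rule indep_vars_compose2[OF indep]) simp
  then have "(LINT \<omega>|M. (\<Prod>i\<in>I. zp_exp (X i \<omega> * c i))) = (\<Prod>i\<in>I. LINT \<omega>|M. zp_exp (X i \<omega> * c i))"
    using integrable_finite_valued[OF finite_measure_axioms X] \<open>finite I\<close>
    by (intro indep_vars_lebesgue_integral) auto
  then show ?thesis
    by (simp add: zp_exp_sum zp_charfun_def zp_pairing_eq_zp_exp)
qed

lemma zp_charfun_linear_forms:
  fixes X :: "nat \<Rightarrow> 'a \<Rightarrow> 'n::nontriv mod_ring"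
  assumes "prob_space M" "prob_space.indep_vars M (\<lambda>_. count_space UNIV) X {1, 2, 3, 4}"
  shows "(LINT \<omega>|M. zp_exp ((X 1 \<omega> + a2 * X 2 \<omega> + a3 * X 3 \<omega>) * u + (b2 * X 2 \<omega> + b3 * X 3 \<omega> + X 4 \<omega>) * v))
    = zp_charfun M (X 1) u * zp_charfun M (X 2) (a2 * u + b2 * v)
      * zp_charfun M (X 3) (a3 * u + b3 * v) * zp_charfun M (X 4) v"
proof -
  define c where "c i = (if i = 1 then u else if i = 2 then a2 * u + b2 * v
    else if i = 3 then a3 * u + b3 * v else v)" for i :: nat
  have "(X 1 \<omega> + a2 * X 2 \<omega> + a3 * X 3 \<omega>) * u + (b2 * X 2 \<omega> + b3 * X 3 \<omega> + X 4 \<omega>) * v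
      = (\<Sum>i\<in>{1, 2, 3, 4}. X i \<omega> * c i)" for \<omega>
    by (simp add: c_def algebra_simps)
  then show ?thesis
    using zp_charfun_sum_indep[OF assms, of c] by (simp add: c_def mult.assoc)
qed


lemma measurable_if_indep_vars:
  assumes "prob_space M" "prob_space.indep_vars M M' X I" "i \<in> I"
  shows "X i \<in> M \<rightarrow>\<^sub>M M' i"
  using assms by (auto simp: prob_space.indep_vars_def)

lemma zp_charfun_linear_forms_eq_if_same_distr:
  fixes \<xi> :: "nat \<Rightarrow> 'a \<Rightarrow> 'n::nontriv mod_ring" and \<eta> :: "nat \<Rightarrow> 'b \<Rightarrow> 'n mod_ring"
  assumes M: "prob_space M" and N: "prob_space N"
    and indep_\<xi>: "prob_space.indep_vars M (\<lambda>_. count_space UNIV) \<xi> {1, 2, 3, 4}"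
    and indep_\<eta>: "prob_space.indep_vars N (\<lambda>_. count_space UNIV) \<eta> {1, 2, 3, 4}"
    and same_distr:
      "distr N (count_space UNIV)
         (\<lambda>\<omega>. (\<eta> 1 \<omega> + a2 * \<eta> 2 \<omega> + a3 * \<eta> 3 \<omega>, b2 * \<eta> 2 \<omega> + b3 * \<eta> 3 \<omega> + \<eta> 4 \<omega>))
       = distr M (count_space UNIV)
         (\<lambda>\<omega>. (\<xi> 1 \<omega> + a2 * \<xi> 2 \<omega> + a3 * \<xi> 3 \<omega>, b2 * \<xi> 2 \<omega> + b3 * \<xi> 3 \<omega> + \<xi> 4 \<omega>))"
  shows "zp_charfun N (\<eta> 1) u * zp_charfun N (\<eta> 2) (a2 * u + b2 * v)
      * zp_charfun N (\<eta> 3) (a3 * u + b3 * v) * zp_charfun N (\<eta> 4) v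
    = zp_charfun M (\<xi> 1) u * zp_charfun M (\<xi> 2) (a2 * u + b2 * v)
      * zp_charfun M (\<xi> 3) (a3 * u + b3 * v) * zp_charfun M (\<xi> 4) v"
proof -
  have [measurable]: "\<xi> j \<in> M \<rightarrow>\<^sub>M count_space UNIV" "\<eta> j \<in> N \<rightarrow>\<^sub>M count_space UNIV"
    if "j \<in> {1, 2, 3, 4}" for j
    using measurable_if_indep_vars[OF M indep_\<xi> that] measurable_if_indep_vars[OF N indep_\<eta> that]
    by simp_all
  define F where "F = (\<lambda>(p, q). zp_exp (p * u + q * v))"
  have "(LINT \<omega>|N. F (\<eta> 1 \<omega> + a2 * \<eta> 2 \<omega> + a3 * \<eta> 3 \<omega>, b2 * \<eta> 2 \<omega> + b3 * \<eta> 3 \<omega> + \<eta> 4 \<omega>))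
      = (LINT \<omega>|M. F (\<xi> 1 \<omega> + a2 * \<xi> 2 \<omega> + a3 * \<xi> 3 \<omega>, b2 * \<xi> 2 \<omega> + b3 * \<xi> 3 \<omega> + \<xi> 4 \<omega>))"
    by (rule integral_comp_eq_if_distr_eq[OF _ _ same_distr]) measurable
  then show ?thesis
    unfolding F_def prod.case zp_charfun_linear_forms[OF M indep_\<xi>] zp_charfun_linear_forms[OF N indep_\<eta>] .
qed

section \<open>The ratio equation\<close>

locale cf_ratio_equation =
  fixes h :: "nat \<Rightarrow> 'p::prime_card mod_ring \<Rightarrow> complex" and a2 a3 b2 b3 :: "'p mod_ring"
  assumes odd_card: "odd CARD('p)"
    and coeffs_nonzero: "a2 \<noteq> 0" "a3 \<noteq> 0" "b2 \<noteq> 0" "b3 \<noteq> 0"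
    and at_0: "\<And>j. h j 0 = 1"
    and hermitian: "\<And>j y. h j (- y) = cnj (h j y)"
    and equation: "\<And>u v. h 1 u * h 2 (a2 * u + b2 * v) * h 3 (a3 * u + b3 * v) * h 4 v = 1"
begin

lemma outer_eq_inverse:
  shows "h 1 = (\<lambda>u. inverse (h 2 (a2 * u) * h 3 (a3 * u)))"
    and "h 4 = (\<lambda>v. inverse (h 2 (b2 * v) * h 3 (b3 * v)))"
proof -
  have "h 1 u = inverse (h 2 (a2 * u) * h 3 (a3 * u))" for u
    using equation[of u 0] by (intro inverse_unique [symmetric]) (simp add: at_0 mult_ac)
  moreover have "h 4 v = inverse (h 2 (b2 * v) * h 3 (b3 * v))" for v
    using equation[of 0 v] by (intro inverse_unique [symmetric]) (simp add: at_0 mult_ac)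
  ultimately show "h 1 = (\<lambda>u. inverse (h 2 (a2 * u) * h 3 (a3 * u)))"
    and "h 4 = (\<lambda>v. inverse (h 2 (b2 * v) * h 3 (b3 * v)))"
    by auto
qed

lemma inner_nonzero: "h 2 w \<noteq> 0" "h 3 w \<noteq> 0"
  using equation[of "w / a2" 0] equation[of "w / a3" 0] coeffs_nonzero by auto

lemma is_zp_character_if_nondegenerate:
  assumes det: "a2 * b3 \<noteq> a3 * b2" and j: "j \<in> {1, 2, 3, 4}"
  shows "is_zp_character (h j)"
proof -
  have equation': "h 1 u * h 3 (a3 * u + b3 * v) * h 2 (a2 * u + b2 * v) * h 4 v = 1" for u v
    using equation[of u v] by (simp only: mult_ac)
  have det': "a3 * b2 \<noteq> a2 * b3"
    using det by simp
  have "h 2 (s + x + y) * h 2 s * h 2 x * h 2 y = h 2 (s + x) * h 2 (s + y) * h 2 (x + y)" for s x y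
    using quadratic_if_separable_two_forms[where hB = "h 2", OF equation coeffs_nonzero(1,3) det]
    by (simp add: at_0)
  then have inner_2: "is_zp_character (h 2)"
    by (rule is_zp_character_if_quadratic_hermitian[where \<phi> = "h 2",
          OF odd_card at_0 inner_nonzero(1) hermitian])
  have "h 3 (s + x + y) * h 3 s * h 3 x * h 3 y = h 3 (s + x) * h 3 (s + y) * h 3 (x + y)" for s x y
    using quadratic_if_separable_two_forms[where hB = "h 3", OF equation' coeffs_nonzero(2,4) det']
    by (simp add: at_0)
  then have inner_3: "is_zp_character (h 3)"
    by (rule is_zp_character_if_quadratic_hermitian[where \<phi> = "h 3",
          OF odd_card at_0 inner_nonzero(2) hermitian])
  note scaled = is_zp_character_scale[OF inner_2] is_zp_character_scale[OF inner_3]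
  have "is_zp_character (h 1)" "is_zp_character (h 4)"
    unfolding outer_eq_inverse by (rule is_zp_character_inverse is_zp_character_mult scaled)+
  with inner_2 inner_3 j show ?thesis
    by auto
qed

lemma is_zp_character_if_degenerate:
  assumes det: "a2 * b3 = a3 * b2" and j: "j \<in> {1, 4}"
  shows "is_zp_character (h j)"
proof -
  define c where "c = a3 / a2"
  have "c * a2 = a3"
    using coeffs_nonzero(1) by (simp add: c_def)
  moreover have "c * b2 = a2 * b3 / a2"
    unfolding c_def det by simp
  then have "c * b2 = b3"
    using coeffs_nonzero(1) by simp
  ultimately have linear: "c * (a2 * u + b2 * v) = a3 * u + b3 * v" for u v
    by (simp add: distrib_left flip: mult.assoc)
  define H where "H w = h 2 w * h 3 (c * w)" for w
  have equation_H: "h 1 u * H (a2 * u + b2 * v) * h 4 v = 1" for u v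
    unfolding H_def linear using equation[of u v] by (simp only: mult.assoc)
  have "is_zp_character H"
  proof (rule is_zp_character_if_shift_mult)
    show "H 0 = 1"
      by (simp add: H_def at_0)
    show "H (x + 1) = H x * H 1" for x
      using hom_if_separable_linear[where H = H, OF equation_H coeffs_nonzero(1,3), of x 1] \<open>H 0 = 1\<close>
      by simp
  qed
  note scaled = is_zp_character_inverse[OF is_zp_character_scale[OF this]]
  have "h 1 u = inverse (H (a2 * u))" for u
    using equation_H[of u 0] by (intro inverse_unique [symmetric]) (simp add: at_0 mult.commute)
  moreover have "h 4 v = inverse (H (b2 * v))" for v
    using equation_H[of 0 v] by (intro inverse_unique [symmetric]) (simp add: at_0 mult.commute)
  ultimately have "h 1 = (\<lambda>u. inverse (H (a2 * u)))" "h 4 = (\<lambda>v. inverse (H (b2 * v)))"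
    by auto
  with scaled j show ?thesis
    by auto
qed

end

theorem theorem4p1:
  fixes M :: "'a measure" and N :: "'b measure"
    and \<xi> :: "nat \<Rightarrow> 'a \<Rightarrow> 'p::prime_card mod_ring"
    and \<eta> :: "nat \<Rightarrow> 'b \<Rightarrow> 'p mod_ring"
    and a2 a3 b2 b3 :: "'p mod_ring"
  assumes p_ne_2: "CARD('p) \<noteq> 2"
    and nz: "a2 \<noteq> 0" "a3 \<noteq> 0" "b2 \<noteq> 0" "b3 \<noteq> 0"
    and M: "prob_space M" and N: "prob_space N"
    and indep_xi: "prob_space.indep_vars M (\<lambda>_. count_space UNIV) \<xi> {1, 2, 3, 4}"
    and cf_xi: "\<forall>j\<in>{1, 2, 3, 4}. \<forall>y. zp_charfun M (\<xi> j) y \<noteq> 0"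
    and indep_eta: "prob_space.indep_vars N (\<lambda>_. count_space UNIV) \<eta> {1, 2, 3, 4}"
    and cf_eta: "\<forall>j\<in>{1, 2, 3, 4}. \<forall>y. zp_charfun N (\<eta> j) y \<noteq> 0"
    and same_distr:
      "distr N (count_space UNIV)
         (\<lambda>\<omega>. (\<eta> 1 \<omega> + a2 * \<eta> 2 \<omega> + a3 * \<eta> 3 \<omega>, b2 * \<eta> 2 \<omega> + b3 * \<eta> 3 \<omega> + \<eta> 4 \<omega>))
       = distr M (count_space UNIV)
         (\<lambda>\<omega>. (\<xi> 1 \<omega> + a2 * \<xi> 2 \<omega> + a3 * \<xi> 3 \<omega>, b2 * \<xi> 2 \<omega> + b3 * \<xi> 3 \<omega> + \<xi> 4 \<omega>))"
  shows "(a2 * b3 \<noteq> a3 * b2 \<longrightarrow>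
           (\<exists>\<alpha> :: nat \<Rightarrow> 'p mod_ring. \<forall>j\<in>{1, 2, 3, 4}.
              distr N (count_space UNIV) (\<eta> j) = distr M (count_space UNIV) (\<lambda>\<omega>. \<xi> j \<omega> + \<alpha> j)))
       \<and> (a2 * b3 = a3 * b2 \<longrightarrow>
           (\<exists>\<alpha> :: nat \<Rightarrow> 'p mod_ring. \<forall>j\<in>{1, 4}.
              distr N (count_space UNIV) (\<eta> j) = distr M (count_space UNIV) (\<lambda>\<omega>. \<xi> j \<omega> + \<alpha> j)))"
proof -
  define h where "h j y = zp_charfun N (\<eta> j) y / zp_charfun M (\<xi> j) y" for j y
  interpret cf_ratio_equation h a2 a3 b2 b3
  proof
    show "odd CARD('p)"
      using prime_card[where 'a = 'p] p_ne_2 prime_ge_2_nat[of "CARD('p)"] by (simp add: prime_odd_nat)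
    show "h j 0 = 1" for j
      by (simp add: h_def zp_charfun_0 M N)
    show "h j (- y) = cnj (h j y)" for j y
      by (simp add: h_def zp_charfun_uminus)
    show "h 1 u * h 2 (a2 * u + b2 * v) * h 3 (a3 * u + b3 * v) * h 4 v = 1" for u v
      using zp_charfun_linear_forms_eq_if_same_distr[OF M N indep_xi indep_eta same_distr, of u v] cf_xi
      by (simp add: h_def)
  qed (fact nz)+
  have shift: "\<exists>\<alpha>. distr N (count_space UNIV) (\<eta> j) = distr M (count_space UNIV) (\<lambda>\<omega>. \<xi> j \<omega> + \<alpha>)"
    if "j \<in> {1, 2, 3, 4}" "is_zp_character (h j)" for j
    using distr_eq_shift_if_is_zp_character[OF prob_space.finite_measure[OF M]
        measurable_if_indep_vars[OF M indep_xi] prob_space.finite_measure[OF N]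
        measurable_if_indep_vars[OF N indep_eta]] cf_xi that
    unfolding h_def by auto
  show ?thesis
    using shift is_zp_character_if_nondegenerate is_zp_character_if_degenerate
    by (intro conjI impI bchoice ballI) auto
qed

end
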